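(* The global Kuroda principle is strictly stronger than the local Kuroda principle: every descriptive $\mathsf{MS4}$-frame satisfying the global Kuroda principle satisfies the local Kuroda principle, and there is a finite $\mathsf{MS4}$-frame satisfying the local Kuroda principle but not the global Kuroda principle.
   Context: A descriptive $\mathsf{MS4}$-frame is $(Y,R,E)$ with $Y$ a Stone space, $R$ a continuous quasi-order, $E$ a continuous equivalence relation (continuous: $R[x]=\{y:xRy\}$ closed for all $x$, $R^{-1}[U]$ clopen for clopen $U$), such that $xEy$, $yRz$ imply $\exists u$ with $xRu$, $uEz$; finite $\mathsf{MS4}$-frames (with the discrete topology) are descriptive. $\operatorname{qmax}Y=\{x: xRy\Rightarrow yRx\}$; $xE_Ry$ iff $xRy$ and $yRx$. Global Kuroda principle: for every $x\in\operatorname{qmax}Y$, $E[x]\subseteq\operatorname{qmax}Y$. Local Kuroda principle: for every $x\in\operatorname{qmax}Y$ there is $y$ with $xE_Ry$ and $E[y]\subseteq\operatorname{qmax}Y$. *)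

theory Defs
  imports "HOL-Analysis.Analysis"
begin

definition stone_space :: "'a topology \<Rightarrow> bool" where
  "stone_space T \<longleftrightarrow> compact_space T \<and> Hausdorff_space T \<and>
     (\<forall>U x. openin T U \<and> x \<in> U \<longrightarrow>
        (\<exists>V. openin T V \<and> closedin T V \<and> x \<in> V \<and> V \<subseteq> U))"

definition continuous_rel :: "'a topology \<Rightarrow> 'a rel \<Rightarrow> bool" where
  "continuous_rel T R \<longleftrightarrow>
     (\<forall>x \<in> topspace T. closedin T (R `` {x})) \<and>
     (\<forall>U. openin T U \<and> closedin T U \<longrightarrow>
        openin T ((R\<inverse>) `` U) \<and> closedin T ((R\<inverse>) `` U))"

definition quasi_order_on :: "'a set \<Rightarrow> 'a rel \<Rightarrow> bool" where
  "quasi_order_on Y R \<longleftrightarrow> R \<subseteq> Y \<times> Y \<and> refl_on Y R \<and> trans R"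

definition ms4_frame :: "'a set \<Rightarrow> 'a rel \<Rightarrow> 'a rel \<Rightarrow> bool" where
  "ms4_frame Y R E \<longleftrightarrow> quasi_order_on Y R \<and> equiv Y E \<and>
     (\<forall>x y z. (x, y) \<in> E \<and> (y, z) \<in> R \<longrightarrow> (\<exists>u. (x, u) \<in> R \<and> (u, z) \<in> E))"

definition descriptive_ms4_frame :: "'a topology \<Rightarrow> 'a rel \<Rightarrow> 'a rel \<Rightarrow> bool" where
  "descriptive_ms4_frame T R E \<longleftrightarrow> stone_space T \<and> ms4_frame (topspace T) R E \<and>
     continuous_rel T R \<and> continuous_rel T E"

definition qmax :: "'a set \<Rightarrow> 'a rel \<Rightarrow> 'a set" where
  "qmax Y R = {x \<in> Y. \<forall>y. (x, y) \<in> R \<longrightarrow> (y, x) \<in> R}"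

definition global_kuroda :: "'a set \<Rightarrow> 'a rel \<Rightarrow> 'a rel \<Rightarrow> bool" where
  "global_kuroda Y R E \<longleftrightarrow> (\<forall>x \<in> qmax Y R. E `` {x} \<subseteq> qmax Y R)"

definition local_kuroda :: "'a set \<Rightarrow> 'a rel \<Rightarrow> 'a rel \<Rightarrow> bool" where
  "local_kuroda Y R E \<longleftrightarrow> (\<forall>x \<in> qmax Y R. \<exists>y. (x, y) \<in> R \<and> (y, x) \<in> R \<and> E `` {y} \<subseteq> qmax Y R)"

end

theory Submission
  imports Defs
begin

text \<open>The global principle gives the local one with the witness \<open>y = x\<close>. For the converse,
  take the cluster \<open>{0, 1}\<close> seen from the point \<open>2\<close>, and let \<open>E\<close> identify \<open>0\<close> with \<open>2\<close>:
  the quasi-maximal point \<open>0\<close> has the non-quasi-maximal \<open>2\<close> in its \<open>E\<close>-class, while its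
  cluster-mate \<open>1\<close> has a singleton \<open>E\<close>-class.\<close>

lemma local_kuroda_if_global_kuroda:
  assumes "refl_on Y R" and "global_kuroda Y R E"
  shows "local_kuroda Y R E"
  unfolding local_kuroda_def
proof
  fix x assume x: "x \<in> qmax Y R"
  then have "(x, x) \<in> R"
    using assms(1) by (simp add: qmax_def refl_on_def)
  moreover have "E `` {x} \<subseteq> qmax Y R"
    using assms(2) x by (simp add: global_kuroda_def)
  ultimately show "\<exists>y. (x, y) \<in> R \<and> (y, x) \<in> R \<and> E `` {y} \<subseteq> qmax Y R"
    by blast
qed

lemma stone_space_discrete_topology:
  assumes "finite Y"
  shows "stone_space (discrete_topology Y)"
  unfolding stone_space_def
  using assms by (auto simp: compact_space_discrete_topology)

lemma continuous_rel_discrete_topology: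
  assumes "R \<subseteq> Y \<times> Y"
  shows "continuous_rel (discrete_topology Y) R"
  using assms unfolding continuous_rel_def by auto

lemma descriptive_ms4_frame_discrete_topology:
  assumes "finite Y" and "ms4_frame Y R E"
  shows "descriptive_ms4_frame (discrete_topology Y) R E"
proof -
  have "R \<subseteq> Y \<times> Y" and "E \<subseteq> Y \<times> Y"
    using assms(2) by (auto simp: ms4_frame_def quasi_order_on_def equiv_def refl_on_def)
  then show ?thesis
    using assms unfolding descriptive_ms4_frame_def
    by (simp add: stone_space_discrete_topology continuous_rel_discrete_topology)
qed

definition cluster_below_R :: "nat rel" where
  "cluster_below_R = {(0,0), (1,1), (2,2), (0,1), (1,0), (2,0), (2,1)}"

definition cluster_below_E :: "nat rel" where
  "cluster_below_E = {(0,0), (1,1), (2,2), (0,2), (2,0)}"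

lemma cluster_below_commute:
  assumes "(x, y) \<in> cluster_below_E" and "(y, z) \<in> cluster_below_R"
  shows "\<exists>u. (x, u) \<in> cluster_below_R \<and> (u, z) \<in> cluster_below_E"
proof (intro exI[of _ "if z = 2 then 0 else z"])
  show "(x, if z = 2 then 0 else z) \<in> cluster_below_R \<and> (if z = 2 then 0 else z, z) \<in> cluster_below_E"
    using assms unfolding cluster_below_E_def cluster_below_R_def by auto
qed

lemma ms4_frame_cluster_below: "ms4_frame {0, 1, 2} cluster_below_R cluster_below_E"
proof -
  have "quasi_order_on {0, 1, 2} cluster_below_R"
    unfolding quasi_order_on_def refl_on_def trans_def cluster_below_R_def by auto
  moreover have "equiv {0, 1, 2} cluster_below_E"
    unfolding equiv_def refl_on_def sym_def trans_def cluster_below_E_def by auto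
  ultimately show ?thesis
    unfolding ms4_frame_def using cluster_below_commute by blast
qed

lemma qmax_cluster_below: "qmax {0, 1, 2} cluster_below_R = {0, 1}"
  unfolding qmax_def cluster_below_R_def by auto

lemma local_kuroda_cluster_below: "local_kuroda {0, 1, 2} cluster_below_R cluster_below_E"
proof -
  have "cluster_below_E `` {1} = {1}"
    by (auto simp: cluster_below_E_def)
  moreover have "(x, 1) \<in> cluster_below_R \<and> (1, x) \<in> cluster_below_R" if "x \<in> {0, 1}" for x
    using that by (auto simp: cluster_below_R_def)
  ultimately show ?thesis
    unfolding local_kuroda_def qmax_cluster_below by blast
qed

lemma not_global_kuroda_cluster_below: "\<not> global_kuroda {0, 1, 2} cluster_below_R cluster_below_E"
proof -
  have "2 \<in> cluster_below_E `` {0}"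
    by (simp add: cluster_below_E_def)
  then show ?thesis
    unfolding global_kuroda_def qmax_cluster_below by auto
qed

theorem proposition4p3:
  shows "(\<forall>(T :: 'a topology) R E. descriptive_ms4_frame T R E \<and> global_kuroda (topspace T) R E
            \<longrightarrow> local_kuroda (topspace T) R E)
       \<and> (\<exists>(Y :: nat set) R E. finite Y \<and> ms4_frame Y R E \<and>
            descriptive_ms4_frame (discrete_topology Y) R E \<and>
            local_kuroda Y R E \<and> \<not> global_kuroda Y R E)"
proof (intro conjI allI impI)
  fix T :: "'a topology" and R E
  assume frame: "descriptive_ms4_frame T R E \<and> global_kuroda (topspace T) R E"
  then have "refl_on (topspace T) R"
    by (simp add: descriptive_ms4_frame_def ms4_frame_def quasi_order_on_def)
  with frame show "local_kuroda (topspace T) R E"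
    using local_kuroda_if_global_kuroda by blast
next
  have "finite {0, 1, 2 :: nat}"
    by simp
  then show "\<exists>(Y :: nat set) R E. finite Y \<and> ms4_frame Y R E \<and>
          descriptive_ms4_frame (discrete_topology Y) R E \<and>
          local_kuroda Y R E \<and> \<not> global_kuroda Y R E"
    using ms4_frame_cluster_below descriptive_ms4_frame_discrete_topology
      local_kuroda_cluster_below not_global_kuroda_cluster_below
    by blast
qed

end
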